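(* Let $\gamma>0$, let $\mathbf{b},\tilde{\mathbf{b}}\in\mathbb{R}^m$, and let $\mathbf{u}^*_\gamma$ and $\tilde{\mathbf{u}}^*_\gamma$ be solutions of the stabilized-regularized system $$\big((\mathbf{I}+\gamma\mathbf{A}^t\mathbf{A})\mathbf{A}^t\mathbf{A}+\gamma\mathbf{L}^t\mathbf{L}\big)\mathbf{u}=(\mathbf{I}+\gamma\mathbf{A}^t\mathbf{A})\mathbf{A}^t\mathbf{c}+\gamma\mathbf{L}^t\mathbf{g}$$ with right-hand data $\mathbf{c}=\mathbf{b}$ and $\mathbf{c}=\tilde{\mathbf{b}}$ respectively (same $\mathbf{A},\mathbf{L},\mathbf{g}$). Then $$\|\mathbf{A}\mathbf{u}^*_\gamma-\mathbf{A}\tilde{\mathbf{u}}^*_\gamma\|_m\le\|(\mathbf{I}+\gamma\mathbf{A}\mathbf{A}^t)(\mathbf{b}-\tilde{\mathbf{b}})\|_m.$$ Moreover, if $m\ge n$ and $\mathbf{A}$ has full column rank $n$, then $$\|\mathbf{u}^*_\gamma-\tilde{\mathbf{u}}^*_\gamma\|_n\le\frac{1}{\sqrt{\lambda_n}}\|(\mathbf{I}+\gamma\mathbf{A}\mathbf{A}^t)(\mathbf{b}-\tilde{\mathbf{b}})\|_m,$$ where $\lambda_n>0$ is the smallest eigenvalue of $\mathbf{A}^t\mathbf{A}$.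
   Context: $\mathbf{A}\in\mathbb{R}^{m\times n}$, $\mathbf{L}\in\mathbb{R}^{p\times n}$, $\mathbf{g}\in\mathbb{R}^p$, $\mathbf{I}$ denotes identity matrices of appropriate size, $\|\cdot\|_m,\|\cdot\|_n$ are Euclidean norms. The displayed system is the normal equation of minimizing $\mathcal{J}_\gamma(\mathbf{v})=\tfrac12\|\mathbf{A}\mathbf{v}-\mathbf{c}\|_m^2-\tfrac12\|\mathbf{c}\|_m^2+\frac{\gamma}{2}\|\mathbf{A}^t\mathbf{A}\mathbf{v}-\mathbf{A}^t\mathbf{c}\|_n^2+\frac{\gamma}{2}\|\mathbf{L}\mathbf{v}-\mathbf{g}\|_p^2$ over $\mathbb{R}^n$, with $\|\cdot\|_p$ the Euclidean norm on $\mathbb{R}^p$. *)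

theory Defs
  imports "HOL-Analysis.Analysis"
begin

definition mat_eigenvalues :: "real^'n^'n \<Rightarrow> real set" where
  "mat_eigenvalues M = {l. \<exists>v. v \<noteq> 0 \<and> M *v v = l *\<^sub>R v}"

text \<open>Smallest eigenvalue (meaningful for symmetric matrices such as A^t A,
  whose eigenvalues are real and finitely many).\<close>
definition smallest_eigenvalue :: "real^'n^'n \<Rightarrow> real" where
  "smallest_eigenvalue M = Min (mat_eigenvalues M)"

definition stab_reg_solution ::
  "real \<Rightarrow> real^'n^'m \<Rightarrow> real^'n^'p \<Rightarrow> real^'p \<Rightarrow> real^'m \<Rightarrow> real^'n \<Rightarrow> bool" where
  "stab_reg_solution \<gamma> A L g c u \<longleftrightarrow>
     ((mat 1 + \<gamma> *\<^sub>R (transpose A ** A)) ** (transpose A ** A) + \<gamma> *\<^sub>R (transpose L ** L)) *v u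
     = (mat 1 + \<gamma> *\<^sub>R (transpose A ** A)) *v (transpose A *v c) + \<gamma> *\<^sub>R (transpose L *v g)"

end

theory Submission
  imports Defs
begin

text \<open>Subtracting the two normal equations, the difference \<open>w = u - u'\<close> satisfies
  \<open>((I + \<gamma>M)M + \<gamma>L\<^sup>tL) w = A\<^sup>t e\<close> with \<open>M = A\<^sup>tA\<close> and \<open>e = (I + \<gamma>AA\<^sup>t)(b - b')\<close>, since
  \<open>(I + \<gamma>A\<^sup>tA)A\<^sup>t = A\<^sup>t(I + \<gamma>AA\<^sup>t)\<close>. Testing with \<open>w\<close> gives
  \<open>\<parallel>Aw\<parallel>\<^sup>2 + \<gamma>\<parallel>Mw\<parallel>\<^sup>2 + \<gamma>\<parallel>Lw\<parallel>\<^sup>2 = \<langle>Aw, e\<rangle>\<close>, so \<open>\<parallel>Aw\<parallel>\<^sup>2 \<le> \<parallel>Aw\<parallel> \<parallel>e\<parallel>\<close> by Cauchy-Schwarz.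
  For full column rank, the smallest eigenvalue of \<open>A\<^sup>tA\<close> is the minimum of the Rayleigh
  quotient \<open>\<parallel>Ax\<parallel>\<^sup>2 / \<parallel>x\<parallel>\<^sup>2\<close>, which is positive and bounds \<open>\<parallel>w\<parallel>\<^sup>2\<close> by \<open>\<parallel>Aw\<parallel>\<^sup>2\<close>.\<close>

lemma inner_transpose_matrix_vector:
  "(x::real^'n) \<bullet> (transpose B *v y) = (B *v x) \<bullet> (y::real^'m)"
  by (metis inner_commute dot_lmul_matrix transpose_matrix_vector)

lemma inner_gram_matrix_vector:
  fixes A :: "real^'n^'m"
  shows "x \<bullet> ((transpose A ** A) *v x) = norm (A *v x) ^ 2"
  by (simp add: matrix_vector_mul_assoc[symmetric] inner_transpose_matrix_vector
      power2_norm_eq_inner del: transpose_matrix_vector)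

lemma symmetric_gram_matrix:
  fixes A :: "real^'n^'m"
  shows "transpose (transpose A ** A) = transpose A ** A"
  by (simp add: matrix_transpose_mul)


lemma stab_reg_solution_diff:
  assumes "stab_reg_solution \<gamma> A L g b u" and "stab_reg_solution \<gamma> A L g b' u'"
  shows "((mat 1 + \<gamma> *\<^sub>R (transpose A ** A)) ** (transpose A ** A)
            + \<gamma> *\<^sub>R (transpose L ** L)) *v (u - u')
         = transpose A *v ((mat 1 + \<gamma> *\<^sub>R (A ** transpose A)) *v (b - b'))"
proof -
  have "(mat 1 + \<gamma> *\<^sub>R (transpose A ** A)) *v (transpose A *v (b - b'))
        = transpose A *v ((mat 1 + \<gamma> *\<^sub>R (A ** transpose A)) *v (b - b'))"
    by (simp add: matrix_vector_mult_add_rdistrib matrix_vector_right_distrib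
        scaleR_matrix_vector_assoc[symmetric] matrix_vector_mul_assoc[symmetric]
        matrix_vector_mult_scaleR)
  with assms show ?thesis
    unfolding stab_reg_solution_def
    by (simp add: matrix_vector_mult_diff_distrib algebra_simps)
qed

lemma stab_reg_energy_identity:
  fixes A :: "real^'n^'m" and L :: "real^'n^'p"
  defines "M \<equiv> transpose A ** A"
  assumes "((mat 1 + \<gamma> *\<^sub>R M) ** M + \<gamma> *\<^sub>R (transpose L ** L)) *v w = transpose A *v e"
  shows "norm (A *v w) ^ 2 + \<gamma> * norm (M *v w) ^ 2 + \<gamma> * norm (L *v w) ^ 2 = (A *v w) \<bullet> e"
proof -
  have "((mat 1 + \<gamma> *\<^sub>R M) ** M + \<gamma> *\<^sub>R (transpose L ** L)) *v w
        = M *v w + \<gamma> *\<^sub>R (transpose M *v (M *v w)) + \<gamma> *\<^sub>R ((transpose L ** L) *v w)"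
    by (simp add: M_def symmetric_gram_matrix matrix_vector_mult_add_rdistrib
        scaleR_matrix_vector_assoc[symmetric] matrix_vector_mul_assoc[symmetric])
  then have "w \<bullet> (transpose A *v e)
             = w \<bullet> (M *v w) + \<gamma> * (w \<bullet> (transpose M *v (M *v w)))
               + \<gamma> * (w \<bullet> ((transpose L ** L) *v w))"
    using assms(2) by (simp add: inner_add_right)
  then show ?thesis
    by (simp add: M_def inner_gram_matrix_vector inner_transpose_matrix_vector
        power2_norm_eq_inner del: transpose_matrix_vector)
qed

lemma stab_reg_solution_data_stability:
  assumes "\<gamma> \<ge> 0"
    and "stab_reg_solution \<gamma> A L g b u" and "stab_reg_solution \<gamma> A L g b' u'"
  shows "norm (A *v (u - u')) \<le> norm ((mat 1 + \<gamma> *\<^sub>R (A ** transpose A)) *v (b - b'))"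
proof -
  define e where "e = (mat 1 + \<gamma> *\<^sub>R (A ** transpose A)) *v (b - b')"
  have "norm (A *v (u - u')) ^ 2 \<le> (A *v (u - u')) \<bullet> e"
    using stab_reg_energy_identity[OF stab_reg_solution_diff[OF assms(2,3), folded e_def]]
      \<open>\<gamma> \<ge> 0\<close> by (smt (verit) mult_nonneg_nonneg zero_le_power2)
  also have "\<dots> \<le> norm (A *v (u - u')) * norm e"
    by (rule Cauchy_Schwarz_ineq2[THEN order_trans[OF abs_ge_self]])
  finally have "norm (A *v (u - u')) * norm (A *v (u - u')) \<le> norm (A *v (u - u')) * norm e"
    by (simp add: power2_eq_square)
  then show ?thesis
    unfolding e_def by (cases "norm (A *v (u - u')) = 0") auto
qed


lemma linear_coeff_zero_if_quadratic_nonneg: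
  fixes R D :: real
  assumes "\<And>t. 0 \<le> 2 * t * R + t\<^sup>2 * D"
  shows "R = 0"
proof -
  define c where "c = \<bar>D\<bar> + 1"
  have "c > 0" by (simp add: c_def add_nonneg_pos)
  have "0 \<le> 2 * (- R / c) * R + (- R / c)\<^sup>2 * D" by (rule assms)
  also have "\<dots> = R\<^sup>2 * (D - 2 * c) / c\<^sup>2"
    using \<open>c > 0\<close> by (simp add: field_simps power2_eq_square)
  finally have "0 \<le> R\<^sup>2 * (D - 2 * c)"
    using \<open>c > 0\<close> by (simp add: zero_le_divide_iff)
  moreover have "D - 2 * c < 0" by (simp add: c_def)
  ultimately have "R\<^sup>2 \<le> 0" by (simp add: zero_le_mult_iff)
  then show ?thesis by simp
qed

lemma gram_rayleigh_minimizer: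
  fixes A :: "real^'n^'m"
  obtains v where "norm v = 1" "\<And>x. norm (A *v v) ^ 2 * norm x ^ 2 \<le> norm (A *v x) ^ 2"
proof -
  have "sphere (0::real^'n) 1 \<noteq> {}"
    using vector_choose_size[of 1] by auto
  moreover have "continuous_on (sphere (0::real^'n) 1) (\<lambda>x. norm (A *v x) ^ 2)"
    by (intro continuous_intros linear_continuous_on matrix_vector_mul_linear)
  ultimately obtain v where "v \<in> sphere 0 1"
    and "\<forall>y\<in>sphere 0 1. norm (A *v v) ^ 2 \<le> norm (A *v y) ^ 2"
    using continuous_attains_inf[OF compact_sphere] by blast
  then have v: "norm v = 1" and min: "\<And>y. norm y = 1 \<Longrightarrow> norm (A *v v) ^ 2 \<le> norm (A *v y) ^ 2"
    by auto
  have "norm (A *v v) ^ 2 * norm x ^ 2 \<le> norm (A *v x) ^ 2" for x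
  proof (cases "x = 0")
    case False
    have "norm (A *v v) ^ 2 \<le> norm (A *v ((1 / norm x) *\<^sub>R x)) ^ 2"
      using False by (intro min) simp
    also have "\<dots> = norm (A *v x) ^ 2 / norm x ^ 2"
      by (simp add: matrix_vector_mult_scaleR power_divide)
    finally show ?thesis using False by (simp add: field_simps)
  qed simp
  with v that show ?thesis by blast
qed

text \<open>First variation: perturbing the minimizer \<open>v\<close> along the residual \<open>r = A\<^sup>tAv - \<mu>v\<close>
  gives a quadratic in \<open>t\<close> whose linear coefficient is \<open>\<parallel>r\<parallel>\<^sup>2\<close>.\<close>

lemma gram_rayleigh_minimizer_eigenvector:
  fixes A :: "real^'n^'m"
  assumes "norm v = 1" and min: "\<And>x. norm (A *v v) ^ 2 * norm x ^ 2 \<le> norm (A *v x) ^ 2"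
  shows "(transpose A ** A) *v v = norm (A *v v) ^ 2 *\<^sub>R v"
proof -
  define \<mu> where "\<mu> = norm (A *v v) ^ 2"
  define r where "r = (transpose A ** A) *v v - \<mu> *\<^sub>R v"
  define D where "D = (A *v r) \<bullet> (A *v r) - \<mu> * (r \<bullet> r)"
  have vv: "v \<bullet> v = 1" using \<open>norm v = 1\<close> by (simp add: power2_norm_eq_inner[symmetric])
  have "(A *v v) \<bullet> (A *v r) = r \<bullet> ((transpose A ** A) *v v)"
    by (simp add: matrix_vector_mul_assoc[symmetric] inner_transpose_matrix_vector inner_commute
        del: transpose_matrix_vector)
  then have cross: "(A *v v) \<bullet> (A *v r) - \<mu> * (v \<bullet> r) = r \<bullet> r"
    by (simp add: r_def inner_diff_right inner_commute algebra_simps)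
  have "0 \<le> 2 * t * (r \<bullet> r) + t\<^sup>2 * D" for t
  proof -
    have "0 \<le> (A *v (v + t *\<^sub>R r)) \<bullet> (A *v (v + t *\<^sub>R r)) - \<mu> * ((v + t *\<^sub>R r) \<bullet> (v + t *\<^sub>R r))"
      using min[of "v + t *\<^sub>R r"] by (simp add: \<mu>_def power2_norm_eq_inner)
    also have "\<dots> = 2 * t * ((A *v v) \<bullet> (A *v r) - \<mu> * (v \<bullet> r)) + t\<^sup>2 * D
                    + ((A *v v) \<bullet> (A *v v) - \<mu> * (v \<bullet> v))"
      by (simp add: D_def matrix_vector_right_distrib matrix_vector_mult_scaleR
          inner_add_left inner_add_right inner_commute power2_eq_square algebra_simps)
    finally show ?thesis
      using cross vv by (simp add: \<mu>_def power2_norm_eq_inner)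
  qed
  then have "r \<bullet> r = 0" by (rule linear_coeff_zero_if_quadratic_nonneg)
  then show ?thesis by (simp add: r_def \<mu>_def)
qed

lemma finite_mat_eigenvalues_symmetric:
  fixes M :: "real^'n^'n"
  assumes sym: "transpose M = M"
  shows "finite (mat_eigenvalues M)"
proof -
  define E where "E = mat_eigenvalues M"
  define ev where "ev l = (SOME v. v \<noteq> 0 \<and> M *v v = l *\<^sub>R v)" for l
  have evp: "ev l \<noteq> 0 \<and> M *v ev l = l *\<^sub>R ev l" if "l \<in> E" for l
  proof -
    from that obtain v where "v \<noteq> 0 \<and> M *v v = l *\<^sub>R v" by (auto simp: E_def mat_eigenvalues_def)
    then show ?thesis unfolding ev_def by (rule someI)
  qed
  have inj: "inj_on ev E"
  proof (rule inj_onI)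
    fix l1 l2 assume "l1 \<in> E" "l2 \<in> E" "ev l1 = ev l2"
    then have "l1 *\<^sub>R ev l1 = l2 *\<^sub>R ev l1" "ev l1 \<noteq> 0" using evp by metis+
    then show "l1 = l2" by simp
  qed
  have "pairwise orthogonal (ev ` E)"
  proof (rule pairwiseI)
    fix x y assume "x \<in> ev ` E" "y \<in> ev ` E" "x \<noteq> y"
    then obtain l1 l2 where l: "l1 \<in> E" "l2 \<in> E" "x = ev l1" "y = ev l2" "l1 \<noteq> l2" by auto
    have "l1 * (x \<bullet> y) = (M *v x) \<bullet> y" using evp[OF l(1)] l(3) by simp
    also have "\<dots> = x \<bullet> (transpose M *v y)" by (simp only: inner_transpose_matrix_vector)
    also have "\<dots> = l2 * (x \<bullet> y)" using evp[OF l(2)] l(4) sym by simp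
    finally show "orthogonal x y" using l(5) by (simp add: orthogonal_def)
  qed
  moreover have "0 \<notin> ev ` E" using evp by auto
  ultimately have "finite (ev ` E)"
    using pairwise_orthogonal_independent independent_bound by blast
  then show ?thesis using finite_imageD inj E_def by blast
qed

lemma smallest_eigenvalue_gram_eq_rayleigh_min:
  fixes A :: "real^'n^'m"
  obtains v where "norm v = 1" "smallest_eigenvalue (transpose A ** A) = norm (A *v v) ^ 2"
    "\<And>x. smallest_eigenvalue (transpose A ** A) * norm x ^ 2 \<le> norm (A *v x) ^ 2"
proof -
  define M where "M = transpose A ** A"
  obtain v where v: "norm v = 1" and min: "\<And>x. norm (A *v v) ^ 2 * norm x ^ 2 \<le> norm (A *v x) ^ 2"
    using gram_rayleigh_minimizer[of A] by blast
  have "v \<noteq> 0" using v by auto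
  then have "norm (A *v v) ^ 2 \<in> mat_eigenvalues M"
    using gram_rayleigh_minimizer_eigenvector[OF v min]
    unfolding M_def mat_eigenvalues_def by blast
  moreover have "norm (A *v v) ^ 2 \<le> l" if "l \<in> mat_eigenvalues M" for l
  proof -
    from that obtain x where x: "x \<noteq> 0" "M *v x = l *\<^sub>R x" by (auto simp: mat_eigenvalues_def)
    then have "l * norm x ^ 2 = norm (A *v x) ^ 2"
      using inner_gram_matrix_vector[of x A] by (simp add: M_def power2_norm_eq_inner)
    then have "norm (A *v v) ^ 2 * norm x ^ 2 \<le> l * norm x ^ 2" using min[of x] by simp
    moreover have "norm x ^ 2 > 0" using x(1) by simp
    ultimately show ?thesis by simp
  qed
  moreover have "finite (mat_eigenvalues M)"
    by (simp add: M_def finite_mat_eigenvalues_symmetric symmetric_gram_matrix)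
  ultimately have eq: "smallest_eigenvalue M = norm (A *v v) ^ 2"
    unfolding smallest_eigenvalue_def by (intro Min_eqI) auto
  show ?thesis
  proof (rule that[OF v])
    show "smallest_eigenvalue (transpose A ** A) = norm (A *v v) ^ 2"
      using eq unfolding M_def .
    show "smallest_eigenvalue (transpose A ** A) * norm x ^ 2 \<le> norm (A *v x) ^ 2" for x
      using min[of x] eq unfolding M_def by simp
  qed
qed

lemma smallest_eigenvalue_gram_pos:
  fixes A :: "real^'n^'m"
  assumes "rank A = CARD('n)"
  shows "smallest_eigenvalue (transpose A ** A) > 0"
proof -
  obtain v where "norm v = 1" "smallest_eigenvalue (transpose A ** A) = norm (A *v v) ^ 2"
    by (rule smallest_eigenvalue_gram_eq_rayleigh_min)
  moreover have "inj ((*v) A)" using assms full_rank_injective by blast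
  ultimately show ?thesis by (metis injD matrix_vector_mult_0_right norm_zero zero_less_norm_iff
      zero_less_power zero_neq_one)
qed

lemma norm_le_gram_smallest_eigenvalue:
  fixes A :: "real^'n^'m"
  assumes "rank A = CARD('n)"
  shows "norm x \<le> norm (A *v x) / sqrt (smallest_eigenvalue (transpose A ** A))"
proof -
  define lam where "lam = smallest_eigenvalue (transpose A ** A)"
  have "lam > 0" unfolding lam_def using smallest_eigenvalue_gram_pos[OF assms] .
  have "lam * norm x ^ 2 \<le> norm (A *v x) ^ 2"
    unfolding lam_def by (rule smallest_eigenvalue_gram_eq_rayleigh_min) blast
  then have "sqrt (lam * norm x ^ 2) \<le> sqrt (norm (A *v x) ^ 2)" by (rule real_sqrt_le_mono)
  then have "sqrt lam * norm x \<le> norm (A *v x)" by (simp add: real_sqrt_mult)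
  with \<open>lam > 0\<close> show ?thesis unfolding lam_def[symmetric] by (simp add: pos_le_divide_eq mult.commute)
qed

theorem theorem3:
  fixes A :: "real^'n^'m" and L :: "real^'n^'p" and g :: "real^'p"
    and b b' :: "real^'m" and u u' :: "real^'n" and \<gamma> :: real
  assumes "\<gamma> > 0"
    and "stab_reg_solution \<gamma> A L g b u"
    and "stab_reg_solution \<gamma> A L g b' u'"
  shows "norm (A *v u - A *v u') \<le> norm ((mat 1 + \<gamma> *\<^sub>R (A ** transpose A)) *v (b - b'))
    \<and> (CARD('m) \<ge> CARD('n) \<and> rank A = CARD('n) \<longrightarrow>
         smallest_eigenvalue (transpose A ** A) > 0 \<and>
         norm (u - u') \<le> 1 / sqrt (smallest_eigenvalue (transpose A ** A))
                        * norm ((mat 1 + \<gamma> *\<^sub>R (A ** transpose A)) *v (b - b')))"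
proof (intro conjI impI)
  let ?e = "norm ((mat 1 + \<gamma> *\<^sub>R (A ** transpose A)) *v (b - b'))"
  have data: "norm (A *v (u - u')) \<le> ?e"
    using assms by (intro stab_reg_solution_data_stability) auto
  then show "norm (A *v u - A *v u') \<le> ?e"
    by (simp only: matrix_vector_mult_diff_distrib)
  assume "CARD('n) \<le> CARD('m) \<and> rank A = CARD('n)"
  then have rank: "rank A = CARD('n)" by simp
  then show pos: "smallest_eigenvalue (transpose A ** A) > 0"
    by (rule smallest_eigenvalue_gram_pos)
  have "norm (u - u') \<le> norm (A *v (u - u')) / sqrt (smallest_eigenvalue (transpose A ** A))"
    by (rule norm_le_gram_smallest_eigenvalue[OF rank])
  also have "\<dots> \<le> ?e / sqrt (smallest_eigenvalue (transpose A ** A))"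
    using real_sqrt_ge_zero[OF less_imp_le[OF pos]] by (intro divide_right_mono data)
  finally show "norm (u - u') \<le> 1 / sqrt (smallest_eigenvalue (transpose A ** A)) * ?e"
    by (simp only: times_divide_eq_left mult_1_left)
qed

end
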